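(* Let $A$ be a finite field and let $S,\bar S\subseteq A$ be subsets with $\#S=\#\bar S$. Let $\psi:A\to S$ and $\bar\psi:A\to\bar S$ be surjective maps such that $\bar\psi$ is additive, i.e. $\bar\psi(x+y)=\bar\psi(x)+\bar\psi(y)$ for all $x,y\in A$. Let $u:A\to A$, $v:A\to A$ and $h:S\to\bar S$ be maps such that $\bar\psi(u(x)+v(x))=h(\psi(x))$ for all $x\in A$. Assume moreover that $\bar\psi(v(x))=0$ for every $x\in A$, and that $v$ is constant on $\psi^{-1}(s)$ for every $s\in S$. Then the map $f(x)=u(x)+v(x)$ is a permutation of $A$ if and only if $u$ is a permutation of $A$. *)

theory Defs
  imports Main
begin

end

theory Submission
  imports Defs
begin

text \<open>Since \<open>psibar\<close> is additive and kills \<open>v\<close>, both \<open>u\<close> and \<open>u + v\<close> satisfy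
  \<open>psibar \<circ> g = h \<circ> psi\<close>. Whichever of them is a permutation is onto, so \<open>h\<close> maps
  \<open>S\<close> onto \<open>Sbar\<close>, and \<open>card S = card Sbar\<close> makes \<open>h\<close> injective on \<open>S\<close>. Then equal
  values of \<open>u\<close> (or of \<open>u + v\<close>) force equal values of \<open>psi\<close>, hence of \<open>v\<close>, so the
  other map is injective too, and on a finite field injective means bijective.\<close>

lemma inj_on_factor_of_surj:
  assumes "finite S" and "card S = card Sbar"
    and "psi ` UNIV = S" and "psibar ` UNIV = Sbar"
    and "surj g"
    and "\<And>x. psibar (g x) = h (psi x)"
  shows "inj_on h S"
proof -
  have "Sbar = psibar ` g ` UNIV" using assms(4,5) by simp
  also have "\<dots> = h ` psi ` UNIV" using assms(6) by (auto simp: image_iff)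
  finally have "card (h ` S) = card S" using assms(2,3) by simp
  then show ?thesis using \<open>finite S\<close> by (simp add: eq_card_imp_inj_on)
qed

lemma inj_add_fibre_const:
  fixes g w :: "'a \<Rightarrow> 'b::ab_group_add"
  assumes "inj g"
    and "\<And>x y. g x + w x = g y + w y \<Longrightarrow> psi x = psi y"
    and "\<And>x y. psi x = psi y \<Longrightarrow> w x = w y"
  shows "inj (\<lambda>x. g x + w x)"
proof (rule injI)
  fix x y assume eq: "g x + w x = g y + w y"
  then have "w x = w y" using assms(2,3) by blast
  with eq have "g x = g y" by simp
  with \<open>inj g\<close> show "x = y" by (rule injD)
qed

lemma bij_iff_inj_finite_UNIV:
  fixes f :: "'a::finite \<Rightarrow> 'a"
  shows "bij f \<longleftrightarrow> inj f"
  using finite_UNIV_inj_surj[of f] by (auto simp: bij_def)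

theorem mainTheorem1:
  fixes S Sbar :: "'a::{field,finite} set"
    and psi psibar u v h :: "'a \<Rightarrow> 'a"
  assumes card_eq: "card S = card Sbar"
    and psi_onto: "psi ` UNIV = S"
    and psibar_onto: "psibar ` UNIV = Sbar"
    and psibar_add: "\<And>x y. psibar (x + y) = psibar x + psibar y"
    and h_maps: "\<And>s. s \<in> S \<Longrightarrow> h s \<in> Sbar"
    and key: "\<And>x. psibar (u x + v x) = h (psi x)"
    and psibar_v: "\<And>x. psibar (v x) = 0"
    and v_const: "\<And>s x y. s \<in> S \<Longrightarrow> psi x = s \<Longrightarrow> psi y = s \<Longrightarrow> v x = v y"
  shows "bij (\<lambda>x. u x + v x) \<longleftrightarrow> bij u"
proof -
  define f where "f = (\<lambda>x. u x + v x)"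
  have psibar_u: "psibar (u x) = h (psi x)" for x
    using key[of x] by (simp add: psibar_add psibar_v)
  have v_fibre: "psi x = psi y \<Longrightarrow> v x = v y" for x y
    using v_const psi_onto by blast
  have h_inj: "inj_on h S" if "surj g" "\<And>x. psibar (g x) = h (psi x)" for g
    using inj_on_factor_of_surj[OF finite card_eq psi_onto psibar_onto that] .
  have psi_eq: "psi x = psi y" if "inj_on h S" "h (psi x) = h (psi y)" for x y
    using that psi_onto by (auto dest: inj_onD)
  have "bij u" if "bij f"
  proof -
    have "inj_on h S" using h_inj[OF bij_is_surj[OF \<open>bij f\<close>]] key by (simp add: f_def)
    moreover have "h (psi x) = h (psi y)" if "f x + - v x = f y + - v y" for x y
      using that psibar_u[of x] psibar_u[of y] by (simp add: f_def)
    ultimately have "psi x = psi y" if "f x + - v x = f y + - v y" for x y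
      using psi_eq that by blast
    moreover have "- v x = - v y" if "psi x = psi y" for x y
      using v_fibre[OF that] by simp
    ultimately have "inj (\<lambda>x. f x + - v x)"
      by (rule inj_add_fibre_const[OF bij_is_inj[OF \<open>bij f\<close>]])
    then show ?thesis by (simp add: bij_iff_inj_finite_UNIV f_def)
  qed
  moreover have "bij f" if "bij u"
  proof -
    have "inj_on h S" using h_inj[OF bij_is_surj[OF \<open>bij u\<close>] psibar_u] .
    moreover have "h (psi x) = h (psi y)" if "u x + v x = u y + v y" for x y
      using that key[of x] key[of y] by simp
    ultimately have "psi x = psi y" if "u x + v x = u y + v y" for x y
      using psi_eq that by blast
    then have "inj (\<lambda>x. u x + v x)"
      using v_fibre by (rule inj_add_fibre_const[OF bij_is_inj[OF \<open>bij u\<close>]])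
    then show ?thesis by (simp add: bij_iff_inj_finite_UNIV f_def)
  qed
  ultimately show ?thesis unfolding f_def by blast
qed

end
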